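(* Let $n\ge1$, $f_1,\dots,f_n\in\mathcal{S}(\mathbb{R}^d)$, and let $\varphi$ be the characteristic function of an $\mathbb{R}^d$-valued random variable. For $r>0$ let $f_{i,r}=f_i(\cdot/r)$. Then for every $\beta>0$ there exists $C(\beta)<\infty$ such that for all $r>0$, $$\sum_{x\in\mathbb{Z}^d\setminus\{0\}}\left|\circledast_{i=1}^n\left\{\overline{\mathcal{F}[f_{i,r}]}\,\varphi\right\}(x)\right|\le C(\beta)\,r^{-\beta}.$$
   Context: $\mathcal{F}[g](k)=\int g(x)e^{2\pi\mathbf{i}k\cdot x}dx$; characteristic functions are $\varphi(t)=\mathbb{E}[e^{2\pi\mathbf{i}t\cdot\xi}]$. For functions $g_1,\dots,g_n$, $\circledast_{i=1}^1 g_i=g_1$ and $\circledast_{i=1}^n g_i=g_n\ast\{\circledast_{i=1}^{n-1}g_i\}$ with $(g\ast h)(y)=\int g(z)h(y-z)dz$. *)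

theory Defs
  imports "HOL-Probability.Probability"
begin

definition partial_deriv :: "'d::finite \<Rightarrow> (real^'d \<Rightarrow> complex) \<Rightarrow> (real^'d \<Rightarrow> complex)" where
  "partial_deriv j g = (\<lambda>x. frechet_derivative g (at x) (axis j 1))"

definition partial_derivs :: "'d::finite list \<Rightarrow> (real^'d \<Rightarrow> complex) \<Rightarrow> (real^'d \<Rightarrow> complex)" where
  "partial_derivs js g = fold partial_deriv js g"

definition schwartz :: "(real^'d::finite \<Rightarrow> complex) \<Rightarrow> bool" where
  "schwartz g \<longleftrightarrow>
     (\<forall>js. (\<forall>x. partial_derivs js g differentiable (at x)) \<and>
           (\<forall>N::nat. bounded ((\<lambda>x. (1 + norm x) ^ N * norm (partial_derivs js g x)) ` UNIV)))"

definition fourier :: "(real^'d::finite \<Rightarrow> complex) \<Rightarrow> real^'d \<Rightarrow> complex" where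
  "fourier g k = (\<integral>x. g x * exp (2 * pi * \<i> * complex_of_real (k \<bullet> x)) \<partial>lborel)"

definition char_fun :: "'a measure \<Rightarrow> ('a \<Rightarrow> real^'d::finite) \<Rightarrow> real^'d \<Rightarrow> complex" where
  "char_fun M \<xi> t = (\<integral>\<omega>. exp (2 * pi * \<i> * complex_of_real (t \<bullet> \<xi> \<omega>)) \<partial>M)"

definition conv :: "(real^'d::finite \<Rightarrow> complex) \<Rightarrow> (real^'d \<Rightarrow> complex) \<Rightarrow> real^'d \<Rightarrow> complex" where
  "conv g h y = (\<integral>z. g z * h (y - z) \<partial>lborel)"

text \<open>Iterated convolution: conv_iter g 1 = g 1, conv_iter g n = g n * conv_iter g (n-1).
  (The value at n = 0 is an irrelevant convention.)\<close>
fun conv_iter :: "(nat \<Rightarrow> real^'d::finite \<Rightarrow> complex) \<Rightarrow> nat \<Rightarrow> real^'d \<Rightarrow> complex" where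
  "conv_iter g 0 = (\<lambda>_. 0)"
| "conv_iter g (Suc 0) = g 1"
| "conv_iter g (Suc (Suc n)) = conv (g (Suc (Suc n))) (conv_iter g (Suc n))"

definition int_lattice :: "(real^'d::finite) set" where
  "int_lattice = {x. \<forall>i. x $ i \<in> \<int>}"

end

theory Submission
  imports Defs
begin

text \<open>Since \<open>\<F>[f(\<cdot>/r)](k) = r\<^sup>d \<F>[f](r k)\<close>, the Fourier transform of a Schwartz
  function decays faster than any polynomial (because \<open>\<F>[\<partial>\<^sub>j g](k) = -2\<pi>i k\<^sub>j \<F>[g](k)\<close>)
  and \<open>|\<phi>| \<le> 1\<close>, each factor is bounded by \<open>K\<^sub>M r\<^sup>d (1 + r|k|)\<^sup>-\<^sup>M\<close> for every \<open>M\<close>.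
  Peetre's inequality \<open>1 + r|y| \<le> (1 + r|z|)(1 + r|y - z|)\<close> shows that these bounds survive
  convolution.  For \<open>x \<in> \<int>\<^sup>d - {0}\<close> and \<open>M \<ge> d + \<beta>\<close> one has
  \<open>r\<^sup>d (1 + r|x|)\<^sup>-\<^sup>M \<le> r\<^sup>-\<^sup>\<beta> |x|\<^sup>-\<^sup>d\<^sup>-\<^sup>\<beta>\<close>, and \<open>|x|\<^sup>-\<^sup>d\<^sup>-\<^sup>\<beta>\<close> is summable over the lattice.\<close>

section \<open>Lebesgue integrals on Euclidean space\<close>

lemma nn_integral_lborel_affine:
  fixes f :: "'a::euclidean_space \<Rightarrow> ennreal" and c :: real
  assumes [measurable]: "f \<in> borel_measurable borel" and c: "c \<noteq> 0"
  shows "(\<integral>\<^sup>+x. f x \<partial>lborel) = \<bar>c\<bar>^DIM('a) * (\<integral>\<^sup>+x. f (t + c *\<^sub>R x) \<partial>lborel)"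
  by (subst lborel_affine[OF c, of t])
     (simp add: nn_integral_density nn_integral_distr nn_integral_cmult)

lemma lborel_integrable_affine:
  fixes f :: "'a::euclidean_space \<Rightarrow> 'b::{banach, second_countable_topology}"
  assumes f: "integrable lborel f" and c: "c \<noteq> 0"
  shows "integrable lborel (\<lambda>x. f (t + c *\<^sub>R x))"
  using f f[THEN borel_measurable_integrable] c unfolding integrable_iff_bounded
  by (subst (asm) nn_integral_lborel_affine[where c=c and t=t]) (auto simp: ennreal_mult_less_top)

lemma lborel_integrable_affine_iff:
  fixes f :: "'a::euclidean_space \<Rightarrow> 'b::{banach, second_countable_topology}"
  shows "c \<noteq> 0 \<Longrightarrow> integrable lborel (\<lambda>x. f (t + c *\<^sub>R x)) \<longleftrightarrow> integrable lborel f"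
  using lborel_integrable_affine[of f c t]
    lborel_integrable_affine[of "\<lambda>x. f (t + c *\<^sub>R x)" "1/c" "-t/\<^sub>R c"]
  by (auto simp add: field_simps)

lemma lborel_integral_affine:
  fixes f :: "'a::euclidean_space \<Rightarrow> 'b::{banach, second_countable_topology}" and c :: real
  assumes c: "c \<noteq> 0"
  shows "(\<integral>x. f x \<partial>lborel) = \<bar>c\<bar>^DIM('a) *\<^sub>R (\<integral>x. f (t + c *\<^sub>R x) \<partial>lborel)"
proof cases
  assume f[measurable]: "integrable lborel f"
  then show ?thesis
    using c f[THEN borel_measurable_integrable] lborel_integrable_affine[OF f c, of t]
    by (subst lborel_affine[OF c, of t]) (simp add: integral_density integral_distr)
next
  assume "\<not> integrable lborel f"
  with c show ?thesis
    by (simp add: lborel_integrable_affine_iff not_integrable_integral_eq)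
qed

lemma lborel_integrable_translate:
  fixes f :: "'a::euclidean_space \<Rightarrow> 'b::{banach, second_countable_topology}"
  assumes "integrable lborel f"
  shows "integrable lborel (\<lambda>x. f (x + a))"
  using lborel_integrable_affine[OF assms, of 1 a] by (simp add: add.commute)

lemma integrable_prod_inverse_1_plus_square:
  "integrable lborel (\<lambda>x::'a::euclidean_space. \<Prod>b\<in>Basis. inverse (1 + (x \<bullet> b)^2))"
proof (rule integrableI_nonneg)
  have "(\<integral>\<^sup>+x. ennreal (\<Prod>b\<in>Basis. inverse (1 + ((x::'a) \<bullet> b)^2)) \<partial>lborel)
      = (\<integral>\<^sup>+x. (\<Prod>b\<in>(Basis::'a set). ennreal (inverse (1 + (x \<bullet> b)^2))) \<partial>lborel)"
    by (intro nn_integral_cong) (simp add: prod_ennreal)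
  also have "\<dots> = (\<Prod>b\<in>(Basis::'a set). (\<integral>\<^sup>+t. ennreal (inverse (1 + t^2)) \<partial>lborel))"
    by (rule nn_integral_lborel_prod) auto
  also have "\<dots> < \<infinity>"
    using integrable_inverse_1_plus_square
    by (simp add: set_integrable_def einterval_eq_UNIV integrable_iff_bounded power_less_top_ennreal)
  finally show "(\<integral>\<^sup>+x. ennreal (\<Prod>b\<in>Basis. inverse (1 + ((x::'a) \<bullet> b)^2)) \<partial>lborel) < \<infinity>" .
qed (auto intro!: prod_nonneg)

lemma inverse_one_plus_norm_power_le_prod:
  fixes x :: "'a::euclidean_space"
  assumes "N \<ge> 2 * DIM('a)"
  shows "1 / (1 + norm x)^N \<le> (\<Prod>b\<in>Basis. inverse (1 + (x \<bullet> b)^2))"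
proof -
  have "1 + (x \<bullet> b)^2 \<le> (1 + norm x)^2" if "b \<in> Basis" for b
  proof -
    have "(x \<bullet> b)^2 \<le> (norm x)^2"
      using Basis_le_norm[OF that] by (metis abs_ge_zero power2_abs power_mono)
    then show ?thesis by (simp add: power2_sum add_increasing2)
  qed
  then have "(\<Prod>b\<in>Basis. 1 + (x \<bullet> b)^2) \<le> (\<Prod>b\<in>(Basis::'a set). (1 + norm x)^2)"
    by (intro prod_mono) auto
  also have "\<dots> = (1 + norm x)^(2 * DIM('a))" by (simp add: power_mult)
  also have "\<dots> \<le> (1 + norm x)^N" using assms by (intro power_increasing) auto
  finally have "(\<Prod>b\<in>Basis. 1 + (x \<bullet> b)^2) \<le> (1 + norm x)^N" .
  moreover have "0 < (\<Prod>b\<in>(Basis::'a set). 1 + (x \<bullet> b)^2)"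
    by (intro prod_pos) (auto intro: add_pos_nonneg)
  ultimately have "1 / (1 + norm x)^N \<le> 1 / (\<Prod>b\<in>Basis. 1 + (x \<bullet> b)^2)"
    by (intro divide_left_mono) auto
  then show ?thesis by (simp add: prod_inversef[symmetric] divide_inverse)
qed

lemma integrable_inverse_one_plus_norm_power:
  assumes "N \<ge> 2 * DIM('a::euclidean_space)"
  shows "integrable lborel (\<lambda>x::'a. 1 / (1 + norm x)^N)"
proof (rule Bochner_Integration.integrable_bound[OF integrable_prod_inverse_1_plus_square])
  show "AE x in lborel. norm (1 / (1 + norm (x::'a))^N) \<le> norm (\<Prod>b\<in>Basis. inverse (1 + (x \<bullet> b)^2))"
    using inverse_one_plus_norm_power_le_prod[OF assms] by (auto intro!: AE_I2 order_trans[OF _ abs_ge_self])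
qed measurable

lemma
  fixes r :: real
  assumes r: "r > 0" and N: "N \<ge> 2 * DIM('a::euclidean_space)"
  shows integrable_dilated_inverse_power:
      "integrable lborel (\<lambda>z::'a. r^DIM('a) / (1 + r * norm z)^N)"
    and integral_dilated_inverse_power:
      "(\<integral>z. r^DIM('a) / (1 + r * norm (z::'a))^N \<partial>lborel) = (\<integral>z. 1 / (1 + norm (z::'a))^N \<partial>lborel)"
proof -
  have dilate: "(\<lambda>z::'a. 1 / (1 + norm (0 + r *\<^sub>R z))^N) = (\<lambda>z. 1 / (1 + r * norm z)^N)"
    using r by (auto simp: fun_eq_iff)
  note int = integrable_inverse_one_plus_norm_power[OF N]
  show "integrable lborel (\<lambda>z::'a. r^DIM('a) / (1 + r * norm z)^N)"
    using integrable_mult_right[OF lborel_integrable_affine[OF int, of r 0], of "r^DIM('a)"] r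
    by (simp add: dilate)
  have "(\<integral>z. 1 / (1 + norm (z::'a))^N \<partial>lborel) = r^DIM('a) * (\<integral>z. 1 / (1 + r * norm (z::'a))^N \<partial>lborel)"
    using lborel_integral_affine[of r "\<lambda>z::'a. 1 / (1 + norm z)^N" 0] r by (simp add: dilate)
  then show "(\<integral>z. r^DIM('a) / (1 + r * norm (z::'a))^N \<partial>lborel) = (\<integral>z. 1 / (1 + norm (z::'a))^N \<partial>lborel)"
    using integral_mult_right_zero[of lborel "r^DIM('a)" "\<lambda>z::'a. 1 / (1 + r * norm z)^N"] by simp
qed

section \<open>Fourier transforms of Schwartz functions\<close>

lemma schwartz_partial_deriv:
  assumes "schwartz g"
  shows "schwartz (partial_deriv j g)"
proof -
  have "partial_derivs js (partial_deriv j g) = partial_derivs (j # js) g" for js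
    by (simp add: partial_derivs_def)
  then show ?thesis using assms unfolding schwartz_def by metis
qed

lemma schwartz_differentiable:
  assumes "schwartz g"
  shows "g differentiable (at x)"
  using assms[unfolded schwartz_def, rule_format, of "[]"] by (simp add: partial_derivs_def)

lemma schwartz_continuous: "schwartz g \<Longrightarrow> continuous_on UNIV g"
  by (meson continuous_at_imp_continuous_on differentiable_imp_continuous_within schwartz_differentiable)

lemma schwartz_borel_measurable: "schwartz g \<Longrightarrow> g \<in> borel_measurable borel"
  by (simp add: borel_measurable_continuous_onI schwartz_continuous)

lemma schwartz_decay:
  assumes "schwartz g"
  obtains C where "\<And>x. norm (g x) \<le> C / (1 + norm x)^N"
proof -
  have "bounded (range (\<lambda>x. (1 + norm x)^N * norm (partial_derivs [] g x)))"
    using assms unfolding schwartz_def by blast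
  then obtain B where "\<And>x. (1 + norm x)^N * norm (g x) \<le> B"
    by (auto simp: bounded_iff partial_derivs_def)
  then have "norm (g x) \<le> B / (1 + norm x)^N" for x
    by (simp add: pos_le_divide_eq mult.commute add_pos_nonneg)
  then show ?thesis by (rule that)
qed

lemma schwartz_integrable:
  fixes g :: "real^'d::finite \<Rightarrow> complex"
  assumes "schwartz g"
  shows "integrable lborel g"
proof -
  obtain C where C: "\<And>x. norm (g x) \<le> C / (1 + norm x)^(2 * CARD('d))"
    using schwartz_decay[OF assms] by blast
  show ?thesis
  proof (rule Bochner_Integration.integrable_bound)
    show "integrable lborel (\<lambda>x::real^'d. C * (1 / (1 + norm x)^(2 * CARD('d))))"
      by (intro integrable_mult_right integrable_inverse_one_plus_norm_power) simp
    show "g \<in> borel_measurable lborel"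
      using schwartz_borel_measurable[OF assms] by simp
    have "C / (1 + norm x)^(2 * CARD('d)) \<le> norm (C * (1 / (1 + norm x)^(2 * CARD('d))))" for x :: "real^'d"
      by (simp add: divide_right_mono)
    then show "AE x in lborel. norm (g x) \<le> norm (C * (1 / (1 + norm x)^(2 * CARD('d))))"
      using C by (blast intro: order_trans)
  qed
qed

lemma decay_bound_translate:
  fixes f :: "'a::real_normed_vector \<Rightarrow> 'b::real_normed_vector"
  assumes f: "\<And>y. norm (f y) \<le> C / (1 + norm y)^N" and a: "norm a \<le> 1"
  shows "norm (f (x + a)) \<le> 2^N * C / (1 + norm x)^N"
proof -
  have "0 \<le> C" using f[of 0] by (simp add: order_trans[OF norm_ge_zero])
  have "norm x \<le> norm (x + a) + norm a" using norm_triangle_ineq4[of "x + a" a] by simp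
  then have "1 + norm x \<le> 2 + 2 * norm (x + a)" using a norm_ge_zero[of "x + a"] by linarith
  then have "(1 + norm x)^N \<le> (2 * (1 + norm (x + a)))^N" by (intro power_mono) auto
  moreover have "0 < (2 * (1 + norm (x + a)))^N * (1 + norm x)^N"
    by (intro mult_pos_pos zero_less_power add_pos_nonneg) auto
  ultimately have "2^N * C / (2 * (1 + norm (x + a)))^N \<le> 2^N * C / (1 + norm x)^N"
    using \<open>0 \<le> C\<close> by (intro divide_left_mono) auto
  moreover have "C / (1 + norm (x + a))^N = 2^N * C / (2 * (1 + norm (x + a)))^N"
    by (simp only: power_mult_distrib) simp
  ultimately show ?thesis using f[of "x + a"] by linarith
qed

lemma schwartz_has_vector_derivative_line:
  assumes "schwartz g"
  shows "((\<lambda>t. g (x + t *\<^sub>R axis j 1)) has_vector_derivative partial_deriv j g (x + t *\<^sub>R axis j 1)) (at t)"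
proof -
  have line: "((\<lambda>t. x + t *\<^sub>R axis j 1) has_vector_derivative axis j 1) (at t)"
    by (auto intro!: derivative_eq_intros)
  have "(g has_derivative frechet_derivative g (at (x + t *\<^sub>R axis j 1))) (at (x + t *\<^sub>R axis j 1))"
    using schwartz_differentiable[OF assms] by (rule frechet_derivative_works[THEN iffD1])
  from vector_derivative_diff_chain_within[OF line has_derivative_at_withinI[OF this]]
  show ?thesis by (simp add: o_def partial_deriv_def)
qed

lemma schwartz_difference_quotient_bound:
  fixes g :: "real^'d::finite \<Rightarrow> complex"
  assumes g: "schwartz g"
  obtains C where
    "\<And>x h. 0 < h \<Longrightarrow> h \<le> 1 \<Longrightarrow> norm ((g (x + h *\<^sub>R axis j 1) - g x) /\<^sub>R h) \<le> C / (1 + norm x)^N"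
proof -
  define e :: "real^'d" where "e = axis j 1"
  obtain C where C: "\<And>y. norm (partial_deriv j g y) \<le> C / (1 + norm y)^N"
    using schwartz_decay[OF schwartz_partial_deriv[OF g]] by blast
  have "norm ((g (x + h *\<^sub>R e) - g x) /\<^sub>R h) \<le> 2^N * C / (1 + norm x)^N" if h: "0 < h" "h \<le> 1" for x h
  proof -
    have deriv: "((\<lambda>t. g (x + t *\<^sub>R e)) has_vector_derivative partial_deriv j g (x + t *\<^sub>R e)) (at t)" for t
      unfolding e_def by (rule schwartz_has_vector_derivative_line[OF g])
    have "continuous_on {0..h} (\<lambda>t. g (x + t *\<^sub>R e))"
      by (rule continuous_on_vector_derivative) (rule has_vector_derivative_at_within[OF deriv])
    then have "\<exists>t\<in>{0<..<h}. norm (g (x + h *\<^sub>R e) - g (x + 0 *\<^sub>R e))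
        \<le> norm ((h - 0) *\<^sub>R partial_deriv j g (x + t *\<^sub>R e))"
    proof (rule mvt_general[OF \<open>0 < h\<close>])
      show "((\<lambda>t. g (x + t *\<^sub>R e)) has_derivative (\<lambda>s. s *\<^sub>R partial_deriv j g (x + t *\<^sub>R e))) (at t)" for t
        using deriv[of t] by (simp only: has_vector_derivative_def)
    qed
    then obtain t where t: "0 < t" "t < h"
      and mvt: "norm (g (x + h *\<^sub>R e) - g x) \<le> h * norm (partial_deriv j g (x + t *\<^sub>R e))"
      using \<open>0 < h\<close> by auto
    have "norm ((g (x + h *\<^sub>R e) - g x) /\<^sub>R h) \<le> norm (partial_deriv j g (x + t *\<^sub>R e))"
      using mvt h by (simp add: inverse_eq_divide pos_divide_le_eq mult.commute)
    also have "\<dots> \<le> 2^N * C / (1 + norm x)^N"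
      using t h by (intro decay_bound_translate[OF C]) (simp add: e_def)
    finally show ?thesis .
  qed
  then show ?thesis unfolding e_def by (rule that)
qed

lemma difference_quotient_tendsto:
  fixes F :: "real \<Rightarrow> 'a::real_normed_vector"
  assumes "(F has_vector_derivative D) (at 0)" and q: "filterlim q (at 0) sequentially"
  shows "(\<lambda>m. (F (q m) - F 0) /\<^sub>R q m) \<longlonglongrightarrow> D"
proof -
  have "norm (F h - F 0 - h *\<^sub>R D) / norm h = norm ((F h - F 0) /\<^sub>R h - D)" if "h \<noteq> 0" for h
  proof -
    have "F h - F 0 - h *\<^sub>R D = h *\<^sub>R ((F h - F 0) /\<^sub>R h - D)" using that by (simp add: algebra_simps)
    then show ?thesis using that by simp
  qed
  then have "\<forall>\<^sub>F h in at 0. norm (F h - F 0 - h *\<^sub>R D) / norm h = norm ((F h - F 0) /\<^sub>R h - D)"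
    by (auto simp: eventually_at_filter)
  moreover have "((\<lambda>h. norm (F h - F 0 - h *\<^sub>R D) / norm h) \<longlongrightarrow> 0) (at 0)"
    using assms(1) by (simp add: has_vector_derivative_def has_derivative_at)
  ultimately have "((\<lambda>h. norm ((F h - F 0) /\<^sub>R h - D)) \<longlongrightarrow> 0) (at 0)"
    by (rule Lim_transform_eventually[rotated])
  then have "((\<lambda>h. (F h - F 0) /\<^sub>R h) \<longlongrightarrow> D) (at 0)"
    by (simp add: LIM_zero_cancel tendsto_norm_zero_iff)
  from filterlim_compose[OF this q] show ?thesis by (simp add: o_def)
qed

lemma norm_fourier_le: "norm (fourier g k) \<le> (\<integral>x. norm (g x) \<partial>lborel)"
  using integral_norm_bound[of lborel "\<lambda>x. g x * exp (2 * pi * \<i> * complex_of_real (k \<bullet> x))"]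
  by (simp add: fourier_def norm_mult norm_exp_eq_Re)

lemma fourier_translate:
  fixes g :: "real^'d::finite \<Rightarrow> complex"
  shows "fourier (\<lambda>x. g (x + a)) k = exp (- (2 * pi * \<i> * complex_of_real (k \<bullet> a))) * fourier g k"
proof -
  have "fourier g k = (\<integral>x. g (a + 1 *\<^sub>R x) * exp (2 * pi * \<i> * complex_of_real (k \<bullet> (a + 1 *\<^sub>R x))) \<partial>lborel)"
    unfolding fourier_def by (subst lborel_integral_affine[of 1 _ a]) simp_all
  also have "\<dots> = exp (2 * pi * \<i> * complex_of_real (k \<bullet> a)) * fourier (\<lambda>x. g (x + a)) k"
    unfolding fourier_def
    by (simp add: inner_add_right exp_add algebra_simps add.commute flip: integral_mult_right_zero)
  finally show ?thesis by (simp add: exp_minus field_simps)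
qed

lemma integrable_fourier_integrand:
  fixes g :: "real^'d::finite \<Rightarrow> complex"
  assumes "integrable lborel g"
  shows "integrable lborel (\<lambda>x. g x * exp (2 * pi * \<i> * complex_of_real (k \<bullet> x)))"
proof (rule Bochner_Integration.integrable_bound[OF integrable_norm[OF assms]])
  note [measurable] = borel_measurable_integrable[OF assms]
  show "(\<lambda>x. g x * exp (2 * pi * \<i> * complex_of_real (k \<bullet> x))) \<in> borel_measurable lborel"
    by measurable
qed (simp add: norm_mult norm_exp_eq_Re)

lemma fourier_diff:
  assumes "integrable lborel g" "integrable lborel h"
  shows "fourier (\<lambda>x. g x - h x) k = fourier g k - fourier h k"
  using integrable_fourier_integrand[OF assms(1)] integrable_fourier_integrand[OF assms(2)]
  by (simp add: fourier_def left_diff_distrib)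

lemma fourier_scaleR: "fourier (\<lambda>x. c *\<^sub>R g x) k = c *\<^sub>R fourier g k"
  by (simp add: fourier_def scaleR_conv_of_real mult.assoc)

lemma fourier_dominated_convergence:
  fixes u :: "nat \<Rightarrow> real^'d::finite \<Rightarrow> complex"
  assumes [measurable]: "\<And>m. u m \<in> borel_measurable lborel" and "integrable lborel w"
    and lim: "\<And>x. (\<lambda>m. u m x) \<longlonglongrightarrow> v x" and "\<And>m x. norm (u m x) \<le> w x"
  shows "(\<lambda>m. fourier (u m) k) \<longlonglongrightarrow> fourier v k"
proof -
  have [measurable]: "v \<in> borel_measurable lborel"
    using lim by (rule borel_measurable_LIMSEQ_metric[rotated]) simp
  show ?thesis
    unfolding fourier_def
    using assms(2,4) lim
    by (intro integral_dominated_convergence[where w = w])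
       (auto simp: norm_mult norm_exp_eq_Re intro!: tendsto_mult_right)
qed

text \<open>Differentiation under the integral: translating \<open>g\<close> multiplies \<open>\<F>[g]\<close> by a character,
  and the difference quotients of \<open>g\<close> converge to \<open>\<partial>\<^sub>j g\<close> dominatedly.\<close>
lemma fourier_partial_deriv:
  fixes g :: "real^'d::finite \<Rightarrow> complex"
  assumes g: "schwartz g"
  shows "fourier (partial_deriv j g) k = - (2 * pi * \<i> * complex_of_real (k $ j)) * fourier g k"
proof -
  define c where "c = - (2 * pi * \<i> * complex_of_real (k $ j))"
  define q where "q = (\<lambda>m::nat. inverse (real (Suc m)))"
  define u where "u = (\<lambda>m x. (g (x + q m *\<^sub>R axis j 1) - g x) /\<^sub>R q m)"
  have q: "filterlim q (at 0) sequentially"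
    unfolding filterlim_at q_def using LIMSEQ_inverse_real_of_nat by auto
  have quotient: "fourier (u m) k = ((exp (complex_of_real (q m) * c) - 1) /\<^sub>R q m) * fourier g k" for m
  proof -
    have "fourier (\<lambda>x. g (x + q m *\<^sub>R axis j 1)) k = exp (complex_of_real (q m) * c) * fourier g k"
      by (simp add: fourier_translate c_def inner_axis mult_ac)
    then show ?thesis
      using schwartz_integrable[OF g] unfolding u_def
      by (simp add: fourier_scaleR fourier_diff lborel_integrable_translate algebra_simps)
  qed
  have "(\<lambda>m. ((exp (complex_of_real (q m) * c) - 1) /\<^sub>R q m) * fourier g k) \<longlonglongrightarrow> c * fourier g k"
  proof (intro tendsto_mult_right)
    have "((\<lambda>z. exp (z * c)) has_field_derivative c) (at (of_real 0))"
      by (auto intro!: derivative_eq_intros)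
    then have "((\<lambda>h. exp (complex_of_real h * c)) has_vector_derivative c) (at 0)"
      by (rule has_vector_derivative_real_field)
    from difference_quotient_tendsto[OF this q]
    show "(\<lambda>m. (exp (complex_of_real (q m) * c) - 1) /\<^sub>R q m) \<longlonglongrightarrow> c" by simp
  qed
  then have "(\<lambda>m. fourier (u m) k) \<longlonglongrightarrow> c * fourier g k"
    by (simp only: quotient)
  moreover have "(\<lambda>m. fourier (u m) k) \<longlonglongrightarrow> fourier (partial_deriv j g) k"
  proof -
    define N where "N = 2 * CARD('d)"
    obtain C where C: "\<And>x h. 0 < h \<Longrightarrow> h \<le> 1 \<Longrightarrow>
        norm ((g (x + h *\<^sub>R axis j 1) - g x) /\<^sub>R h) \<le> C / (1 + norm x)^N"
      using schwartz_difference_quotient_bound[OF g] by blast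
    note [measurable] = schwartz_borel_measurable[OF g]
    show ?thesis
    proof (rule fourier_dominated_convergence)
      show "u m \<in> borel_measurable lborel" for m
        unfolding u_def by measurable
      show "integrable lborel (\<lambda>x::real^'d. C * (1 / (1 + norm x)^N))"
        by (intro integrable_mult_right integrable_inverse_one_plus_norm_power) (simp add: N_def)
      show "norm (u m x) \<le> C * (1 / (1 + norm x)^N)" for m x
        using C[of "q m" x] unfolding u_def q_def by (simp add: inverse_le_1_iff)
      show "(\<lambda>m. u m x) \<longlonglongrightarrow> partial_deriv j g x" for x
        using difference_quotient_tendsto[OF schwartz_has_vector_derivative_line[OF g, of x j 0] q]
        by (simp add: u_def)
    qed
  qed
  ultimately show ?thesis
    unfolding c_def by (rule LIMSEQ_unique[symmetric])
qed

lemma schwartz_partial_deriv_power: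
  assumes "schwartz g"
  shows "schwartz ((partial_deriv j ^^ m) g)"
  by (induction m) (simp_all add: assms schwartz_partial_deriv)

lemma fourier_partial_deriv_power:
  fixes g :: "real^'d::finite \<Rightarrow> complex"
  assumes "schwartz g"
  shows "fourier ((partial_deriv j ^^ m) g) k = (- (2 * pi * \<i> * complex_of_real (k $ j)))^m * fourier g k"
  by (induction m)
     (simp_all add: fourier_partial_deriv schwartz_partial_deriv_power[OF assms])

lemma fourier_coordinate_power_bound:
  fixes g :: "real^'d::finite \<Rightarrow> complex"
  assumes "schwartz g"
  obtains B where "\<And>k. \<bar>k $ j\<bar>^m * norm (fourier g k) \<le> B"
proof
  fix k :: "real^'d"
  have "\<bar>k $ j\<bar>^m \<le> (2 * pi * \<bar>k $ j\<bar>)^m"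
    using pi_ge_two by (intro power_mono) (auto simp: mult_le_cancel_right1)
  then have "\<bar>k $ j\<bar>^m * norm (fourier g k) \<le> (2 * pi * \<bar>k $ j\<bar>)^m * norm (fourier g k)"
    by (intro mult_right_mono) auto
  also have "\<dots> = norm (fourier ((partial_deriv j ^^ m) g) k)"
    using fourier_partial_deriv_power[OF assms, where j = j and m = m and k = k]
    by (simp add: norm_mult norm_power)
  also have "\<dots> \<le> (\<integral>x. norm ((partial_deriv j ^^ m) g x) \<partial>lborel)"
    by (rule norm_fourier_le)
  finally show "\<bar>k $ j\<bar>^m * norm (fourier g k) \<le> (\<integral>x. norm ((partial_deriv j ^^ m) g x) \<partial>lborel)" .
qed

lemma one_plus_norm_power_le_sum:
  fixes x :: "real^'d::finite"
  shows "(1 + norm x)^M \<le> (real CARD('d) + 1)^M * (1 + (\<Sum>j\<in>UNIV. \<bar>x $ j\<bar>^M))"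
proof -
  define m where "m = Max (insert 1 (range (\<lambda>j. \<bar>x $ j\<bar>)))"
  have m1: "1 \<le> m" and mj: "\<And>j. \<bar>x $ j\<bar> \<le> m"
    unfolding m_def by (intro Max_ge; simp)+
  have "norm x \<le> (\<Sum>j\<in>UNIV. \<bar>x $ j\<bar>)" by (rule norm_le_l1_cart)
  also have "\<dots> \<le> real CARD('d) * m" using sum_mono[of UNIV "\<lambda>j. \<bar>x $ j\<bar>" "\<lambda>_. m", OF mj] by simp
  finally have "(1 + norm x)^M \<le> ((real CARD('d) + 1) * m)^M"
    using m1 by (intro power_mono) (auto simp: algebra_simps)
  also have "\<dots> = (real CARD('d) + 1)^M * m^M" by (rule power_mult_distrib)
  also have "m^M \<le> 1 + (\<Sum>j\<in>UNIV. \<bar>x $ j\<bar>^M)"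
  proof -
    have "m \<in> insert 1 (range (\<lambda>j. \<bar>x $ j\<bar>))" unfolding m_def by (intro Max_in) auto
    moreover have "\<bar>x $ i\<bar>^M \<le> 1 + (\<Sum>j\<in>UNIV. \<bar>x $ j\<bar>^M)" for i
      using member_le_sum[of i UNIV "\<lambda>j. \<bar>x $ j\<bar>^M"] by simp
    moreover have "0 \<le> (\<Sum>j\<in>UNIV. \<bar>x $ j\<bar>^M)" by (simp add: sum_nonneg)
    ultimately show ?thesis by auto
  qed
  finally show ?thesis by (simp add: mult_left_mono)
qed

lemma fourier_decay:
  fixes g :: "real^'d::finite \<Rightarrow> complex"
  assumes "schwartz g"
  obtains K where "\<And>k. norm (fourier g k) \<le> K / (1 + norm k)^M"
proof -
  have "\<forall>j. \<exists>B. \<forall>k. \<bar>k $ j\<bar>^M * norm (fourier g k) \<le> B"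
    using fourier_coordinate_power_bound[OF assms] by metis
  then obtain B where B: "\<And>j k. \<bar>k $ j\<bar>^M * norm (fourier g k) \<le> B j" by metis
  define B0 where "B0 = (\<integral>x. norm (g x) \<partial>lborel)"
  define K where "K = (real CARD('d) + 1)^M * (B0 + (\<Sum>j\<in>UNIV. B j))"
  have "(1 + norm k)^M * norm (fourier g k) \<le> K" for k
  proof -
    have "(1 + norm k)^M * norm (fourier g k)
        \<le> (real CARD('d) + 1)^M * ((1 + (\<Sum>j\<in>UNIV. \<bar>k $ j\<bar>^M)) * norm (fourier g k))"
      using mult_right_mono[OF one_plus_norm_power_le_sum[of k M] norm_ge_zero[of "fourier g k"]]
      by (simp add: mult.assoc)
    also have "(1 + (\<Sum>j\<in>UNIV. \<bar>k $ j\<bar>^M)) * norm (fourier g k)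
        = norm (fourier g k) + (\<Sum>j\<in>UNIV. \<bar>k $ j\<bar>^M * norm (fourier g k))"
      by (simp add: distrib_right sum_distrib_right)
    also have "\<dots> \<le> B0 + (\<Sum>j\<in>UNIV. B j)"
      unfolding B0_def by (intro add_mono sum_mono norm_fourier_le B)
    finally show ?thesis unfolding K_def by (simp add: mult_left_mono)
  qed
  then show ?thesis
    by (intro that) (simp add: pos_le_divide_eq mult.commute add_pos_nonneg)
qed

lemma fourier_dilation:
  fixes g :: "real^'d::finite \<Rightarrow> complex"
  assumes r: "r > 0"
  shows "fourier (\<lambda>y. g (y /\<^sub>R r)) k = complex_of_real (r ^ CARD('d)) * fourier g (r *\<^sub>R k)"
proof -
  have "fourier (\<lambda>y. g (y /\<^sub>R r)) k
      = r ^ CARD('d) *\<^sub>R (\<integral>x. g x * exp (2 * pi * \<i> * complex_of_real ((r *\<^sub>R k) \<bullet> x)) \<partial>lborel)"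
    unfolding fourier_def using r by (subst lborel_integral_affine[of r _ 0]) simp_all
  then show ?thesis by (simp add: fourier_def scaleR_conv_of_real)
qed

lemma norm_char_fun_le_1:
  assumes "prob_space M"
  shows "norm (char_fun M \<xi> k) \<le> 1"
proof -
  have "norm (char_fun M \<xi> k) \<le> (\<integral>\<omega>. norm (exp (2 * pi * \<i> * complex_of_real (k \<bullet> \<xi> \<omega>))) \<partial>M)"
    unfolding char_fun_def by (rule integral_norm_bound)
  also have "\<dots> = 1" using prob_space.prob_space[OF assms] by (simp add: norm_exp_eq_Re)
  finally show ?thesis .
qed

section \<open>Uniformly dilated decay\<close>

text \<open>No integrability of \<open>f\<close> is assumed: a non-integrable \<open>f\<close> has Bochner integral \<open>0\<close>.\<close>
lemma norm_integral_le_of_dominated: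
  fixes f :: "'a \<Rightarrow> 'b::{banach, second_countable_topology}"
  assumes B: "integrable M B" and le: "\<And>x. norm (f x) \<le> B x"
  shows "norm (integral\<^sup>L M f) \<le> integral\<^sup>L M B"
proof (cases "integrable M f")
  case True
  have "norm (integral\<^sup>L M f) \<le> (\<integral>x. norm (f x) \<partial>M)" by (rule integral_norm_bound)
  also have "\<dots> \<le> integral\<^sup>L M B" using True B le by (intro integral_mono) auto
  finally show ?thesis .
next
  case False
  have "0 \<le> integral\<^sup>L M B" using le by (intro integral_nonneg_AE AE_I2) (meson norm_ge_zero order_trans)
  then show ?thesis using False by (simp add: not_integrable_integral_eq)
qed

lemma peetre_inverse_power:
  fixes r :: real and y z :: "'a::real_normed_vector"
  assumes r: "r > 0"
  shows "1 / (1 + r * norm z)^(M+D) * (1 / (1 + r * norm (y - z))^(M+D))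
           \<le> 1 / (1 + r * norm y)^M * (1 / (1 + r * norm z)^D)"
proof -
  define a where "a = 1 + r * norm z"
  define b where "b = 1 + r * norm (y - z)"
  define c where "c = 1 + r * norm y"
  have a1: "a \<ge> 1" and b1: "b \<ge> 1" and c1: "c \<ge> 1" using r by (auto simp: a_def b_def c_def)
  have "r * norm y \<le> r * norm z + r * norm (y - z)"
    using norm_triangle_ineq[of z "y - z"] r by (simp flip: distrib_left)
  moreover have "0 \<le> (r * norm z) * (r * norm (y - z))" using r by simp
  moreover have "a * b = 1 + r * norm z + r * norm (y - z) + (r * norm z) * (r * norm (y - z))"
    by (simp add: a_def b_def algebra_simps)
  ultimately have "c \<le> a * b" unfolding c_def by linarith
  then have "c^M * a^D \<le> (a*b)^M * a^D" using c1 a1 by (intro mult_right_mono power_mono) auto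
  also have "\<dots> = a^(M+D) * b^M" by (simp add: power_mult_distrib power_add)
  also have "\<dots> \<le> a^(M+D) * b^(M+D)" using a1 b1 by (intro mult_left_mono power_increasing) auto
  finally have "1 / (a^(M+D) * b^(M+D)) \<le> 1 / (c^M * a^D)"
    using a1 b1 c1 by (intro divide_left_mono) auto
  then show ?thesis by (simp add: a_def [symmetric] b_def [symmetric] c_def [symmetric])
qed

text \<open>\<open>r\<^sup>d (1 + r|y|)\<^sup>-\<^sup>M\<close> is the \<open>L\<^sup>1\<close>-normalised dilate of \<open>(1 + |y|)\<^sup>-\<^sup>M\<close>; this
  normalisation is what makes the class closed under convolution.\<close>
definition scaled_decay :: "(real \<Rightarrow> real^'d::finite \<Rightarrow> complex) \<Rightarrow> bool" where
  "scaled_decay h \<longleftrightarrow>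
     (\<forall>M::nat. \<exists>K. \<forall>r>0. \<forall>y. norm (h r y) \<le> K * r ^ CARD('d) / (1 + r * norm y) ^ M)"

lemma norm_conv_le_of_decay:
  fixes g h :: "real^'d::finite \<Rightarrow> complex"
  assumes r: "r > 0"
    and g: "\<And>z. norm (g z) \<le> Kg * r ^ CARD('d) / (1 + r * norm z) ^ (M + 2 * CARD('d))"
    and h: "\<And>z. norm (h z) \<le> Kh * r ^ CARD('d) / (1 + r * norm z) ^ (M + 2 * CARD('d))"
  shows "norm (conv g h y)
    \<le> Kg * Kh * (\<integral>w. 1 / (1 + norm (w::real^'d)) ^ (2 * CARD('d)) \<partial>lborel)
        * r ^ CARD('d) / (1 + r * norm y) ^ M"
proof -
  define d where "d = CARD('d)"
  define D where "D = 2 * d"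
  have "0 \<le> Kg * r ^ CARD('d)" "0 \<le> Kh * r ^ CARD('d)"
    using g[of 0] h[of 0] by (auto intro: order_trans[OF norm_ge_zero])
  moreover have "0 < r ^ CARD('d)" using r by simp
  ultimately have "0 \<le> Kg" "0 \<le> Kh" by (simp_all add: zero_le_mult_iff)
  define B where "B = (\<lambda>z::real^'d. (Kg * Kh * (r^d / (1 + r * norm y)^M)) * (r^d / (1 + r * norm z)^D))"
  have "norm (g z * h (y - z)) \<le> B z" for z
  proof -
    have "norm (g z * h (y - z))
        \<le> (Kg * r^d / (1 + r * norm z)^(M+D)) * (Kh * r^d / (1 + r * norm (y - z))^(M+D))"
      unfolding norm_mult d_def D_def using g h
      by (intro mult_mono) (auto intro: order_trans[OF norm_ge_zero])
    also have "\<dots> = (Kg * Kh * r^d * r^d) * (1 / (1 + r * norm z)^(M+D) * (1 / (1 + r * norm (y - z))^(M+D)))"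
      by simp
    also have "\<dots> \<le> (Kg * Kh * r^d * r^d) * (1 / (1 + r * norm y)^M * (1 / (1 + r * norm z)^D))"
      using \<open>0 \<le> Kg\<close> \<open>0 \<le> Kh\<close> r by (intro mult_left_mono peetre_inverse_power) auto
    finally show ?thesis by (simp add: B_def)
  qed
  moreover have "integrable lborel B"
    unfolding B_def using integrable_dilated_inverse_power[OF r, of D, where 'a="real^'d"]
    by (intro integrable_mult_right) (simp add: D_def d_def)
  ultimately have "norm (conv g h y) \<le> integral\<^sup>L lborel B"
    unfolding conv_def by (intro norm_integral_le_of_dominated)
  also have "\<dots> = Kg * Kh * (r^d / (1 + r * norm y)^M) * (\<integral>z. r^d / (1 + r * norm (z::real^'d))^D \<partial>lborel)"
    unfolding B_def by (rule integral_mult_right_zero)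
  also have "\<dots> = Kg * Kh * (r^d / (1 + r * norm y)^M) * (\<integral>w. 1 / (1 + norm (w::real^'d))^D \<partial>lborel)"
    using integral_dilated_inverse_power[OF r, of D, where 'a="real^'d"]
    by (simp add: D_def d_def)
  finally show ?thesis by (simp add: mult_ac d_def D_def)
qed

lemma scaled_decay_conv:
  fixes g h :: "real \<Rightarrow> real^'d::finite \<Rightarrow> complex"
  assumes "scaled_decay g" "scaled_decay h"
  shows "scaled_decay (\<lambda>r. conv (g r) (h r))"
  unfolding scaled_decay_def
proof
  fix M :: nat
  obtain Kg where "\<And>r z. r > 0 \<Longrightarrow> norm (g r z) \<le> Kg * r ^ CARD('d) / (1 + r * norm z) ^ (M + 2 * CARD('d))"
    using assms(1) unfolding scaled_decay_def by blast
  moreover obtain Kh where "\<And>r z. r > 0 \<Longrightarrow> norm (h r z) \<le> Kh * r ^ CARD('d) / (1 + r * norm z) ^ (M + 2 * CARD('d))"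
    using assms(2) unfolding scaled_decay_def by blast
  ultimately show "\<exists>K. \<forall>r>0. \<forall>y. norm (conv (g r) (h r) y) \<le> K * r ^ CARD('d) / (1 + r * norm y) ^ M"
    by (blast intro: norm_conv_le_of_decay)
qed

lemma scaled_decay_conv_iter:
  fixes G :: "real \<Rightarrow> nat \<Rightarrow> real^'d::finite \<Rightarrow> complex"
  assumes "\<And>i. i \<in> {1..n} \<Longrightarrow> scaled_decay (\<lambda>r. G r i)"
  shows "scaled_decay (\<lambda>r. conv_iter (G r) n)"
  using assms
proof (induction n rule: less_induct)
  case (less n)
  consider "n = 0" | "n = 1" | m where "n = Suc (Suc m)"
    by (metis One_nat_def not0_implies_Suc)
  then show ?case
  proof cases
    case 1
    then show ?thesis by (auto simp: scaled_decay_def intro!: exI[of _ 0])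
  next
    case 2
    then show ?thesis using less.prems by simp
  next
    case (3 m)
    then show ?thesis using less by (simp add: scaled_decay_conv)
  qed
qed

lemma scaled_decay_dilated_fourier_mult:
  fixes f \<phi> :: "real^'d::finite \<Rightarrow> complex"
  assumes f: "schwartz f" and \<phi>: "\<And>k. norm (\<phi> k) \<le> 1"
  shows "scaled_decay (\<lambda>r k. cnj (fourier (\<lambda>y. f (y /\<^sub>R r)) k) * \<phi> k)"
  unfolding scaled_decay_def
proof
  fix M :: nat
  obtain K where K: "\<And>k. norm (fourier f k) \<le> K / (1 + norm k)^M"
    using fourier_decay[OF f] by blast
  have "norm (cnj (fourier (\<lambda>y. f (y /\<^sub>R r)) k) * \<phi> k) \<le> K * r ^ CARD('d) / (1 + r * norm k) ^ M"
    if r: "r > 0" for r k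
  proof -
    have "norm (cnj (fourier (\<lambda>y. f (y /\<^sub>R r)) k) * \<phi> k) \<le> norm (fourier (\<lambda>y. f (y /\<^sub>R r)) k)"
      using \<phi>[of k] by (simp add: norm_mult mult_left_le)
    also have "\<dots> = r ^ CARD('d) * norm (fourier f (r *\<^sub>R k))"
      using r by (simp add: fourier_dilation norm_mult norm_power)
    also have "\<dots> \<le> r ^ CARD('d) * (K / (1 + norm (r *\<^sub>R k))^M)"
      using r K[of "r *\<^sub>R k"] by (intro mult_left_mono) auto
    finally show ?thesis using r by (simp add: mult.commute)
  qed
  then show "\<exists>K. \<forall>r>0. \<forall>k. norm (cnj (fourier (\<lambda>y. f (y /\<^sub>R r)) k) * \<phi> k)
                         \<le> K * r ^ CARD('d) / (1 + r * norm k) ^ M"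
    by blast
qed

section \<open>Sums over the integer lattice\<close>

lemma summable_on_int_one_plus_abs_powr:
  fixes p :: real
  assumes p: "p > 1"
  shows "(\<lambda>k::int. (1 + \<bar>real_of_int k\<bar>) powr -p) summable_on UNIV"
proof -
  have "summable (\<lambda>n. real (Suc n) powr -p)"
    using p summable_Suc_iff[of "\<lambda>n. real n powr -p"] by (simp add: summable_real_powr_iff)
  then have nat: "(\<lambda>n::nat. (1 + real n) powr -p) summable_on UNIV"
    by (subst summable_on_UNIV_nonneg_real_iff) (auto simp: add.commute)
  have "k \<in> range int \<union> range (\<lambda>n. - int n)" for k :: int
    by (cases k rule: int_cases2) auto
  then have "(UNIV::int set) = range int \<union> range (\<lambda>n. - int n)" by blast
  moreover have "(\<lambda>k::int. (1 + \<bar>real_of_int k\<bar>) powr -p) summable_on (range int)"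
    by (subst summable_on_reindex) (auto simp: o_def nat)
  moreover have "(\<lambda>k::int. (1 + \<bar>real_of_int k\<bar>) powr -p) summable_on (range (\<lambda>n. - int n))"
    by (subst summable_on_reindex) (auto simp: o_def nat inj_on_def)
  ultimately show ?thesis by (metis summable_on_union)
qed

lemma int_lattice_summable_prod_powr:
  fixes p :: real
  assumes p: "p > 1"
  shows "(\<lambda>x::real^'d::finite. \<Prod>i\<in>UNIV. (1 + \<bar>x$i\<bar>) powr -p) summable_on int_lattice"
proof -
  define h :: "('d \<Rightarrow> int) \<Rightarrow> real^'d" where "h = (\<lambda>z. \<chi> i. real_of_int (z i))"
  have inj: "inj_on h UNIV"
    unfolding h_def inj_on_def by (auto simp: vec_eq_iff fun_eq_iff)
  have lattice: "int_lattice = range h"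
  proof safe
    fix x :: "real^'d"
    assume "x \<in> int_lattice"
    then have "\<forall>i. \<exists>k. x$i = real_of_int k" unfolding int_lattice_def by (auto elim: Ints_cases)
    then obtain z where "\<forall>i. x$i = real_of_int (z i)" by metis
    then show "x \<in> range h" unfolding h_def by (auto simp: vec_eq_iff)
  qed (auto simp: h_def int_lattice_def)
  define a where "a = (\<lambda>(i::'d) (k::int). (1 + \<bar>real_of_int k\<bar>) powr -p)"
  have "Infinite_Set_Sum.abs_summable_on (a i) (UNIV::int set)" for i
    using summable_on_int_one_plus_abs_powr[OF p] abs_summable_equivalent[of "a i" UNIV]
    by (simp add: a_def)
  then have "Infinite_Set_Sum.abs_summable_on (\<lambda>z. \<Prod>i\<in>UNIV. a i (z i)) (PiE UNIV (\<lambda>_. (UNIV::int set)))"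
    by (intro abs_summable_on_prod_PiE) auto
  then have "(\<lambda>z. \<Prod>i\<in>UNIV. a i (z i)) summable_on (UNIV :: ('d \<Rightarrow> int) set)"
    by (simp flip: abs_summable_equivalent add: abs_summable_summable)
  then show ?thesis
    unfolding lattice by (subst summable_on_reindex[OF inj]) (simp add: o_def h_def a_def)
qed

lemma int_lattice_norm_ge_1:
  assumes "x \<in> int_lattice - {0}"
  shows "norm (x::real^'d::finite) \<ge> 1"
proof -
  from assms obtain i where "x$i \<noteq> 0" "x$i \<in> \<int>" by (auto simp: vec_eq_iff int_lattice_def)
  then have "\<bar>x$i\<bar> \<ge> 1" by (rule Ints_nonzero_abs_ge1[rotated])
  then show ?thesis using component_le_norm_cart[of x i] by linarith
qed

lemma norm_powr_le_prod_powr: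
  fixes x :: "real^'d::finite" and s :: real
  assumes x: "norm x \<ge> 1" and s: "s > 0"
  shows "norm x powr -s \<le> 2 powr s * (\<Prod>i\<in>UNIV. (1 + \<bar>x$i\<bar>) powr -(s / CARD('d)))"
proof -
  define p where "p = s / CARD('d)"
  define N where "N = 1 + norm x"
  define q where "q = (\<Prod>i\<in>(UNIV::'d set). 1 + \<bar>x$i\<bar>)"
  have q1: "q \<ge> 1" unfolding q_def by (intro prod_ge_1) auto
  have N1: "N \<ge> 1" by (simp add: N_def)
  have "q \<le> (\<Prod>i\<in>(UNIV::'d set). N)" unfolding q_def N_def
    by (intro prod_mono) (auto simp: component_le_norm_cart)
  also have "\<dots> = N powr (real CARD('d))" using N1 by (simp add: powr_realpow)
  finally have "q powr p \<le> (N powr (real CARD('d))) powr p"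
    using q1 s by (intro powr_mono2) (auto simp: p_def)
  also have "\<dots> = N powr s" using N1 by (simp add: powr_powr p_def)
  also have "\<dots> \<le> (2 * norm x) powr s" using x s by (intro powr_mono2) (auto simp: N_def)
  also have "\<dots> = 2 powr s * norm x powr s" by (simp add: powr_mult)
  finally have "inverse (2 powr s * norm x powr s) \<le> inverse (q powr p)"
    using q1 by (intro le_imp_inverse_le) auto
  then have "norm x powr -s / 2 powr s \<le> q powr -p"
    by (simp add: powr_minus divide_inverse mult.commute)
  moreover have "q powr -p = (\<Prod>i\<in>UNIV. (1 + \<bar>x$i\<bar>) powr -p)"
    unfolding q_def by (rule prod_powr_distrib)
  ultimately show ?thesis unfolding p_def by (simp add: field_simps)
qed

text \<open>Comparing with a product makes the lattice sum factor into one-dimensional sums.\<close>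
lemma int_lattice_summable_norm_powr:
  fixes s :: real
  assumes s: "s > CARD('d::finite)"
  shows "(\<lambda>x::real^'d. norm x powr -s) summable_on (int_lattice - {0})"
proof (rule summable_on_comparison_test)
  have "(\<lambda>x::real^'d. 2 powr s * (\<Prod>i\<in>UNIV. (1 + \<bar>x$i\<bar>) powr -(s / CARD('d)))) summable_on int_lattice"
    using s by (intro summable_on_cmult_right int_lattice_summable_prod_powr) simp
  then show "(\<lambda>x::real^'d. 2 powr s * (\<Prod>i\<in>UNIV. (1 + \<bar>x$i\<bar>) powr -(s / CARD('d))))
      summable_on (int_lattice - {0})"
    by (rule summable_on_subset) auto
  show "norm x powr -s \<le> 2 powr s * (\<Prod>i\<in>UNIV. (1 + \<bar>x$i\<bar>) powr -(s / CARD('d)))"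
    if "x \<in> int_lattice - {0}" for x :: "real^'d"
    using s int_lattice_norm_ge_1[OF that] by (simp add: norm_powr_le_prod_powr)
qed simp

lemma dilated_inverse_power_le_powr:
  fixes r y b :: real and M d :: nat
  assumes r: "r > 0" and y: "y > 0" and b: "b > 0" and M: "real M \<ge> real d + b"
  shows "r^d / (1 + r * y)^M \<le> r powr -b * y powr -(real d + b)"
proof -
  define s where "s = real d + b"
  define t where "t = r * y"
  have t: "t > 0" using r y by (simp add: t_def)
  have "t powr s \<le> (1 + t)^M"
  proof (cases "t \<ge> 1")
    case True
    have "t powr s \<le> t powr (real M)" using True M by (intro powr_mono) (auto simp: s_def)
    also have "\<dots> = t^M" using t by (simp add: powr_realpow)
    also have "\<dots> \<le> (1 + t)^M" using t by (intro power_mono) auto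
    finally show ?thesis .
  next
    case False
    then have "t powr s \<le> 1" using t b by (intro powr_le1) (auto simp: s_def)
    also have "1 \<le> (1 + t)^M" using t by simp
    finally show ?thesis .
  qed
  then have "r^d / (1 + t)^M \<le> r^d / t powr s"
    using r t by (intro divide_left_mono) auto
  also have "\<dots> = r powr real d * (r powr -s * y powr -s)"
    using r y by (simp add: t_def powr_mult powr_minus divide_inverse powr_realpow)
  also have "\<dots> = r powr -b * y powr -s"
    using r by (simp add: s_def powr_add[symmetric] mult.assoc[symmetric])
  finally show ?thesis by (simp add: t_def s_def)
qed

lemma scaled_decay_lattice_bound:
  fixes H :: "real \<Rightarrow> real^'d::finite \<Rightarrow> complex"
  assumes "scaled_decay H" and \<beta>: "\<beta> > 0"
  obtains K where "\<And>r x. r > 0 \<Longrightarrow> x \<in> int_lattice - {0} \<Longrightarrow>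
    norm (H r x) \<le> (K * r powr -\<beta>) * norm x powr -(real CARD('d) + \<beta>)"
proof -
  define M where "M = nat \<lceil>real CARD('d) + \<beta>\<rceil>"
  have M: "real M \<ge> real CARD('d) + \<beta>" unfolding M_def by linarith
  obtain K where K: "\<And>r y. r > 0 \<Longrightarrow> norm (H r y) \<le> K * r ^ CARD('d) / (1 + r * norm y) ^ M"
    using assms(1) unfolding scaled_decay_def by blast
  have "0 \<le> K" using K[of 1 0] by (simp add: order_trans[OF norm_ge_zero])
  have "norm (H r x) \<le> (K * r powr -\<beta>) * norm x powr -(real CARD('d) + \<beta>)"
    if r: "r > 0" and x: "x \<in> int_lattice - {0}" for r x
  proof -
    have "norm (H r x) \<le> K * (r ^ CARD('d) / (1 + r * norm x) ^ M)" using K[OF r] by simp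
    also have "\<dots> \<le> K * (r powr -\<beta> * norm x powr -(real CARD('d) + \<beta>))"
      using int_lattice_norm_ge_1[OF x] \<beta> r M \<open>0 \<le> K\<close>
      by (intro mult_left_mono dilated_inverse_power_le_powr) auto
    finally show ?thesis by (simp add: mult.assoc)
  qed
  then show ?thesis by (rule that)
qed

lemma scaled_decay_lattice_sum:
  fixes H :: "real \<Rightarrow> real^'d::finite \<Rightarrow> complex"
  assumes "scaled_decay H" and \<beta>: "\<beta> > 0"
  shows "\<exists>C. \<forall>r>0. (\<lambda>x. norm (H r x)) summable_on (int_lattice - {0})
                  \<and> (\<Sum>\<^sub>\<infinity>x\<in>int_lattice - {0}. norm (H r x)) \<le> C * r powr - \<beta>"
proof -
  define s where "s = real CARD('d) + \<beta>"
  obtain K where bound: "\<And>r x. r > 0 \<Longrightarrow> x \<in> int_lattice - {0} \<Longrightarrow>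
      norm (H r x) \<le> (K * r powr -\<beta>) * norm x powr -s"
    using scaled_decay_lattice_bound[OF assms] unfolding s_def by blast
  have summable: "(\<lambda>x::real^'d. norm x powr -s) summable_on (int_lattice - {0})"
    using \<beta> by (intro int_lattice_summable_norm_powr) (simp add: s_def)
  define S where "S = (\<Sum>\<^sub>\<infinity>x\<in>int_lattice - {0}. norm (x::real^'d) powr -s)"
  have "(\<lambda>x. norm (H r x)) summable_on (int_lattice - {0})
      \<and> (\<Sum>\<^sub>\<infinity>x\<in>int_lattice - {0}. norm (H r x)) \<le> K * S * r powr - \<beta>"
    if r: "r > 0" for r
  proof -
    have dominant: "(\<lambda>x::real^'d. (K * r powr -\<beta>) * norm x powr -s) summable_on (int_lattice - {0})"
      by (intro summable_on_cmult_right summable)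
    have "(\<lambda>x. norm (H r x)) summable_on (int_lattice - {0})"
      by (rule summable_on_comparison_test[OF dominant]) (auto simp: bound[OF r])
    moreover have "(\<Sum>\<^sub>\<infinity>x\<in>int_lattice - {0}. norm (H r x))
        \<le> (\<Sum>\<^sub>\<infinity>x\<in>int_lattice - {0}. (K * r powr -\<beta>) * norm (x::real^'d) powr -s)"
      using calculation dominant bound[OF r] by (intro infsum_mono) auto
    moreover have "\<dots> = (K * r powr -\<beta>) * S"
      unfolding S_def by (rule infsum_cmult_right[OF summable])
    ultimately show ?thesis by (simp add: mult_ac)
  qed
  then show ?thesis by blast
qed

theorem lemma2p2:
  fixes n :: nat
    and f :: "nat \<Rightarrow> real^'d::finite \<Rightarrow> complex"
    and M :: "'a measure"
    and \<xi> :: "'a \<Rightarrow> real^'d"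
  assumes "n \<ge> 1"
    and "\<forall>i\<in>{1..n}. schwartz (f i)"
    and "prob_space M"
    and "\<xi> \<in> borel_measurable M"
  shows "\<forall>\<beta>>0. \<exists>C::real. \<forall>r>0.
           (\<lambda>x. norm (conv_iter (\<lambda>i k. cnj (fourier (\<lambda>y. f i (y /\<^sub>R r)) k) * char_fun M \<xi> k) n x))
             summable_on (int_lattice - {0})
         \<and> (\<Sum>\<^sub>\<infinity>x\<in>int_lattice - {0}.
              norm (conv_iter (\<lambda>i k. cnj (fourier (\<lambda>y. f i (y /\<^sub>R r)) k) * char_fun M \<xi> k) n x))
             \<le> C * r powr (- \<beta>)"
proof -
  let ?h = "\<lambda>r i k. cnj (fourier (\<lambda>y. f i (y /\<^sub>R r)) k) * char_fun M \<xi> k"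
  have "scaled_decay (\<lambda>r. ?h r i)" if "i \<in> {1..n}" for i
    using assms(2) that norm_char_fun_le_1[OF assms(3)]
    by (intro scaled_decay_dilated_fourier_mult) auto
  then have "scaled_decay (\<lambda>r. conv_iter (?h r) n)"
    by (rule scaled_decay_conv_iter)
  then show ?thesis
    using scaled_decay_lattice_sum by blast
qed

end
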